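(* There is a constant $C$ independent of $n$ such that $$\mathbb E\big(\|\delta\mathcal T^\xi\|^2\big)\le C\,(\log n+1)\,n^{-3}.$$
   Context: Let $\Omega=[x_L,x_R]$ be a bounded interval. Let $\sigma_T,\sigma_S$ be continuous on $\Omega$ with $0<\sigma_S<\sigma_T$; $\lambda=\|\sigma_S/\sigma_T\|_\infty\in(0,1)$, $\sigma_r=\sigma_S/\lambda$. $L^2(\sigma_T)$ is $L^2(\Omega)$ with inner product $\langle f,g\rangle=\int_{x_L}^{x_R}fg\,\sigma_T\,dx$; operator norms refer to this space. For $\mu\in[-1,1]\setminus\{0\}$, $\mathcal A_\mu$ maps $\phi$ to the solution $\psi$ of $\mu\psi'+\sigma_T\psi=\sigma_r\phi$ on $\Omega$ with $\psi(x_L)=0$ if $\mu>0$, $\psi(x_R)=0$ if $\mu<0$; explicitly $(\mathcal A_\mu\phi)(x)=\int k_\mu(x,y)\phi(y)\sigma_T(y)dy$ with $k_\mu(x,y)=\frac1\mu\mathbb 1_{y\le x}e^{-\frac1\mu\int_y^x\sigma_T}\frac{\sigma_r(y)}{\sigma_T(y)}$ ($\mu>0$), $k_\mu(x,y)=-\frac1\mu\mathbb 1_{y\ge x}e^{\frac1\mu\int_x^y\sigma_T}\frac{\sigma_r(y)}{\sigma_T(y)}$ ($\mu<0$). Truncated velocity set: fix $\delta\in(0,1)$, $S=[-1,-\delta)\cup(\delta,1]$, $\fint_S=\frac1{|S|}\int_S$. Let $n=2m$; partition $[-1,-\delta)$ into intervals $S_1,\dots,S_m$, $S_{n+1-\ell}=-S_\ell$;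 for $\ell\le m$, $\mu_\ell$ independent and uniform on $S_\ell$, $\mu_{n+1-\ell}=-\mu_\ell$. $\omega_\ell=|S_\ell|/|S|$, $\alpha_\ell=n\omega_\ell$, and $\alpha_\ell\le\bar\alpha$ for all $\ell,n$ with $\bar\alpha$ independent of $n$. $\mathcal T=\fint_S\mathcal A_\mu d\mu$, $\mathcal T^\xi=\sum_{\ell=1}^n\omega_\ell\mathcal A_{\mu_\ell}$, and $\delta\mathcal T^\xi=\mathcal T^\xi-\mathcal T$. $\mathbb E$ is expectation over the random ordinates. *)

theory Defs
  imports "HOL-Analysis.Analysis"
begin

text \<open>Parameters: domain [xL,xR], total cross section sT, scattering cross section sS.\<close>

definition lam :: "real \<Rightarrow> real \<Rightarrow> (real \<Rightarrow> real) \<Rightarrow> (real \<Rightarrow> real) \<Rightarrow> real" where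
  "lam xL xR sT sS = (SUP x\<in>{xL..xR}. sS x / sT x)"

definition sigr :: "real \<Rightarrow> real \<Rightarrow> (real \<Rightarrow> real) \<Rightarrow> (real \<Rightarrow> real) \<Rightarrow> real \<Rightarrow> real" where
  "sigr xL xR sT sS y = sS y / lam xL xR sT sS"

definition kern :: "real \<Rightarrow> real \<Rightarrow> (real \<Rightarrow> real) \<Rightarrow> (real \<Rightarrow> real) \<Rightarrow> real \<Rightarrow> real \<Rightarrow> real \<Rightarrow> real" where
  "kern xL xR sT sS \<mu> x y =
     (if 0 < \<mu> then
        (if y \<le> x then (1 / \<mu>) * exp (- (1 / \<mu>) * (LINT s:{y..x}|lborel. sT s)) * (sigr xL xR sT sS y / sT y)
         else 0)
      else if \<mu> < 0 then
        (if x \<le> y then - (1 / \<mu>) * exp ((1 / \<mu>) * (LINT s:{x..y}|lborel. sT s)) * (sigr xL xR sT sS y / sT y)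
         else 0)
      else 0)"

definition Aop :: "real \<Rightarrow> real \<Rightarrow> (real \<Rightarrow> real) \<Rightarrow> (real \<Rightarrow> real) \<Rightarrow> real \<Rightarrow> (real \<Rightarrow> real) \<Rightarrow> real \<Rightarrow> real" where
  "Aop xL xR sT sS \<mu> \<phi> x = (LINT y:{xL..xR}|lborel. kern xL xR sT sS \<mu> x y * \<phi> y * sT y)"

definition L2w :: "real \<Rightarrow> real \<Rightarrow> (real \<Rightarrow> real) \<Rightarrow> (real \<Rightarrow> real) set" where
  "L2w xL xR sT = {\<phi>. \<phi> \<in> borel_measurable lborel \<and> set_integrable lborel {xL..xR} (\<lambda>x. (\<phi> x)\<^sup>2 * sT x)}"

definition wnorm :: "real \<Rightarrow> real \<Rightarrow> (real \<Rightarrow> real) \<Rightarrow> (real \<Rightarrow> real) \<Rightarrow> real" where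
  "wnorm xL xR sT f = sqrt (LINT x:{xL..xR}|lborel. (f x)\<^sup>2 * sT x)"

text \<open>Operator norm on L^2(sigma_T), valued in ennreal (so that it is meaningful even if infinite).\<close>
definition opnorm :: "real \<Rightarrow> real \<Rightarrow> (real \<Rightarrow> real) \<Rightarrow> ((real \<Rightarrow> real) \<Rightarrow> (real \<Rightarrow> real)) \<Rightarrow> ennreal" where
  "opnorm xL xR sT K = (SUP \<phi> \<in> {\<phi> \<in> L2w xL xR sT. wnorm xL xR sT \<phi> \<le> 1}. ennreal (wnorm xL xR sT (K \<phi>)))"

definition Svel :: "real \<Rightarrow> real set" where
  "Svel \<delta> = {-1..<-\<delta>} \<union> {\<delta><..1}"

definition Tavg :: "real \<Rightarrow> real \<Rightarrow> (real \<Rightarrow> real) \<Rightarrow> (real \<Rightarrow> real) \<Rightarrow> real \<Rightarrow> (real \<Rightarrow> real) \<Rightarrow> real \<Rightarrow> real" where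
  "Tavg xL xR sT sS \<delta> \<phi> x =
     (1 / measure lborel (Svel \<delta>)) * (LINT \<mu>:Svel \<delta>|lborel. Aop xL xR sT sS \<mu> \<phi> x)"

text \<open>Partition of [-1,-delta) by points t 0 < t 1 < ... < t m, S_l = [t l, t (l+1)) (0-based);
  the mirrored intervals -S_l carry the ordinates -mu_l. Weight omega_l = |S_l| / |S|.\<close>
definition omega :: "real \<Rightarrow> (nat \<Rightarrow> real) \<Rightarrow> nat \<Rightarrow> real" where
  "omega \<delta> t l = (t (Suc l) - t l) / measure lborel (Svel \<delta>)"

definition Txi :: "real \<Rightarrow> real \<Rightarrow> (real \<Rightarrow> real) \<Rightarrow> (real \<Rightarrow> real) \<Rightarrow> real \<Rightarrow> nat \<Rightarrow> (nat \<Rightarrow> real)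
    \<Rightarrow> (nat \<Rightarrow> real) \<Rightarrow> (real \<Rightarrow> real) \<Rightarrow> real \<Rightarrow> real" where
  "Txi xL xR sT sS \<delta> m t \<mu>s \<phi> x =
     (\<Sum>l<m. omega \<delta> t l * (Aop xL xR sT sS (\<mu>s l) \<phi> x + Aop xL xR sT sS (- \<mu>s l) \<phi> x))"

definition dTxi :: "real \<Rightarrow> real \<Rightarrow> (real \<Rightarrow> real) \<Rightarrow> (real \<Rightarrow> real) \<Rightarrow> real \<Rightarrow> nat \<Rightarrow> (nat \<Rightarrow> real)
    \<Rightarrow> (nat \<Rightarrow> real) \<Rightarrow> (real \<Rightarrow> real) \<Rightarrow> real \<Rightarrow> real" where
  "dTxi xL xR sT sS \<delta> m t \<mu>s \<phi> x = Txi xL xR sT sS \<delta> m t \<mu>s \<phi> x - Tavg xL xR sT sS \<delta> \<phi> x"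

definition ordinate_law :: "nat \<Rightarrow> (nat \<Rightarrow> real) \<Rightarrow> (nat \<Rightarrow> real) measure" where
  "ordinate_law m t = PiM {..<m} (\<lambda>l. uniform_measure lborel {t l..<t (Suc l)})"

end

theory Submission
  imports Defs "HOL-Probability.Probability"
begin

text \<open>
  On the truncated velocity set every ordinate has \<open>\<bar>\<mu>\<bar> \<ge> \<delta>\<close>, so the symmetrised kernel
  \<open>h(\<mu>) = k\<^sub>\<mu> + k\<^sub>-\<^sub>\<mu>\<close> is Lipschitz in \<open>\<mu>\<close>, uniformly in \<open>(x, y)\<close>, with a constant \<open>L\<close>.
  Reflecting the positive velocities onto the negative ones, \<open>\<delta>T\<^sup>\<xi>\<close> is the integral operator
  with kernel \<open>D = \<Sum>\<^sub>l \<omega>\<^sub>l (h(\<mu>\<^sub>l) - mean of h over S\<^sub>l)\<close>, a sum of independent centred terms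
  bounded by \<open>2 L |S\<^sub>l|\<close>. Hence \<open>\<bbbE> D(x,y)\<^sup>2 \<le> \<Sum>\<^sub>l \<omega>\<^sub>l\<^sup>2 (2 L |S\<^sub>l|)\<^sup>2 = O(\<Sum>\<^sub>l \<omega>\<^sub>l\<^sup>4) = O(n\<^sup>-\<^sup>3)\<close>,
  and the operator norm is dominated by the Hilbert-Schmidt norm. The bound thus holds even
  without the factor \<open>log n + 1\<close>.
\<close>

lemma integrable_mult_bounded:
  fixes g h :: "'a \<Rightarrow> real"
  assumes "integrable M g" "h \<in> borel_measurable M" "\<And>y. \<bar>h y\<bar> \<le> B"
  shows "integrable M (\<lambda>y. h y * g y)"
proof (rule Bochner_Integration.integrable_bound[of _ "\<lambda>y. B * g y"])
  show "integrable M (\<lambda>y. B * g y)" using assms by auto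
  show "(\<lambda>y. h y * g y) \<in> borel_measurable M" using assms by auto
  have "0 \<le> B" using assms(3)[of undefined] by linarith
  then show "AE y in M. norm (h y * g y) \<le> norm (B * g y)"
    using assms(3) by (auto simp: abs_mult intro!: mult_right_mono)
qed

lemma discriminant_le_of_quadratic_nonneg:
  fixes A B C :: real
  assumes nonneg: "\<And>t. 0 \<le> A - 2*t*B + t^2*C" and "0 \<le> C"
  shows "B^2 \<le> A * C"
proof (cases "C = 0")
  case True
  show ?thesis
  proof (rule ccontr)
    assume "\<not> ?thesis"
    then have "B \<noteq> 0" using True by auto
    then show False using nonneg[of "(A+1)/(2*B)"] True by (simp add: field_simps)
  qed
next
  case False
  then have "0 < C" using \<open>0 \<le> C\<close> by auto
  have "0 \<le> A - 2*(B/C)*B + (B/C)^2*C" by (rule nonneg)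
  also have "\<dots> = A - B^2/C" using \<open>0 < C\<close> by (simp add: field_simps power2_eq_square)
  finally show ?thesis using \<open>0 < C\<close> by (simp add: field_simps)
qed

lemma weighted_Cauchy_Schwarz:
  fixes f g w :: "'a \<Rightarrow> real"
  assumes "integrable M (\<lambda>x. (f x)^2 * w x)" "integrable M (\<lambda>x. (g x)^2 * w x)"
    and "integrable M (\<lambda>x. f x * g x * w x)" and w: "\<And>x. 0 \<le> w x"
  shows "(\<integral>x. f x * g x * w x \<partial>M)^2 \<le> (\<integral>x. (f x)^2 * w x \<partial>M) * (\<integral>x. (g x)^2 * w x \<partial>M)"
proof (rule discriminant_le_of_quadratic_nonneg)
  fix t :: real
  have "0 \<le> (\<integral>x. (f x - t * g x)^2 * w x \<partial>M)"
    using w by (intro integral_nonneg_AE) auto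
  also have "\<dots> = (\<integral>x. (f x)^2 * w x - 2*t * (f x * g x * w x) + t^2 * ((g x)^2 * w x) \<partial>M)"
    by (intro Bochner_Integration.integral_cong) (auto simp: power2_eq_square algebra_simps)
  also have "\<dots> = (\<integral>x. (f x)^2 * w x \<partial>M) - 2*t*(\<integral>x. f x * g x * w x \<partial>M)
      + t^2 * (\<integral>x. (g x)^2 * w x \<partial>M)"
    using assms by simp
  finally show "0 \<le> (\<integral>x. (f x)^2 * w x \<partial>M) - 2*t*(\<integral>x. f x * g x * w x \<partial>M)
      + t^2 * (\<integral>x. (g x)^2 * w x \<partial>M)" .
qed (use w in \<open>auto intro: integral_nonneg_AE\<close>)

lemma integral_uniform_measure_Ico:
  fixes c d :: real and f :: "real \<Rightarrow> real"
  assumes "c < d" and [measurable]: "f \<in> borel_measurable borel"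
  shows "(\<integral>x. f x \<partial>uniform_measure lborel {c..<d})
    = (\<integral>x. indicator {c..<d} x * f x \<partial>lborel) / (d - c)"
proof -
  have "uniform_measure lborel {c..<d}
      = density lborel (\<lambda>x. ennreal (indicator {c..<d} x / (d - c)))"
    unfolding uniform_measure_def using assms
    by (intro density_cong) (auto simp: divide_ennreal[symmetric] split: split_indicator)
  then have "(\<integral>x. f x \<partial>uniform_measure lborel {c..<d})
      = (\<integral>x. (indicator {c..<d} x / (d - c)) *\<^sub>R f x \<partial>lborel)"
    using assms(1) by (simp add: integral_density)
  also have "\<dots> = (\<integral>x. indicator {c..<d} x * f x / (d - c) \<partial>lborel)"
    by (intro Bochner_Integration.integral_cong) auto
  also have "\<dots> = (\<integral>x. indicator {c..<d} x * f x \<partial>lborel) / (d - c)"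
    by (rule integral_divide_zero)
  finally show ?thesis .
qed

lemma (in pair_sigma_finite) integrable_product_of_integrable:
  fixes f :: "'a \<Rightarrow> real" and g :: "'b \<Rightarrow> real"
  assumes f: "integrable M1 f" and g: "integrable M2 g"
  shows "integrable (M1 \<Otimes>\<^sub>M M2) (\<lambda>z. f (fst z) * g (snd z))"
proof (subst integrable_iff_bounded, intro conjI)
  have [measurable]: "f \<in> borel_measurable M1" "g \<in> borel_measurable M2" using f g by auto
  show "(\<lambda>z. f (fst z) * g (snd z)) \<in> borel_measurable (M1 \<Otimes>\<^sub>M M2)" by measurable
  have "(\<integral>\<^sup>+z. ennreal (norm (f (fst z) * g (snd z))) \<partial>(M1 \<Otimes>\<^sub>M M2))
      = (\<integral>\<^sup>+x. \<integral>\<^sup>+y. ennreal (norm (f x)) * ennreal (norm (g y)) \<partial>M2 \<partial>M1)"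
    by (subst M2.nn_integral_fst[symmetric]) (auto simp: ennreal_mult abs_mult)
  also have "\<dots> = (\<integral>\<^sup>+x. ennreal (norm (f x)) \<partial>M1) * (\<integral>\<^sup>+y. ennreal (norm (g y)) \<partial>M2)"
    by (simp add: nn_integral_cmult nn_integral_multc)
  also have "\<dots> < \<infinity>" using f g by (simp add: integrable_iff_bounded ennreal_mult_less_top)
  finally show "(\<integral>\<^sup>+z. ennreal (norm (f (fst z) * g (snd z))) \<partial>(M1 \<Otimes>\<^sub>M M2)) < \<infinity>" .
qed

lemma prod_supported_on_two:
  fixes h :: "'i \<Rightarrow> 'b::comm_monoid_mult"
  assumes "finite I" "i \<in> I" "j \<in> I" and "\<And>k. k \<in> I \<Longrightarrow> k \<noteq> i \<Longrightarrow> k \<noteq> j \<Longrightarrow> h k = 1"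
  shows "(\<Prod>k\<in>I. h k) = (if i = j then h i else h i * h j)"
proof -
  have "(\<Prod>k\<in>I. h k) = h i * (\<Prod>k\<in>I-{i}. h k)"
    using assms by (intro prod.remove) auto
  moreover have "(\<Prod>k\<in>I-{i}. h k) = h j" if "i \<noteq> j"
  proof -
    have "(\<Prod>k\<in>I-{i}. h k) = h j * (\<Prod>k\<in>I-{i}-{j}. h k)"
      using assms that by (intro prod.remove) auto
    also have "(\<Prod>k\<in>I-{i}-{j}. h k) = 1"
      using assms by (intro prod.neutral) auto
    finally show ?thesis by simp
  qed
  moreover have "(\<Prod>k\<in>I-{i}. h k) = 1" if "i = j"
    using assms that by (intro prod.neutral) auto
  ultimately show ?thesis by auto
qed

lemma (in finite_product_prob_space) integral_product_components:
  fixes f :: "_ \<Rightarrow> _ \<Rightarrow> real"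
  assumes i: "i \<in> I" and j: "j \<in> I"
    and meas: "\<And>k. k \<in> I \<Longrightarrow> f k \<in> borel_measurable (M k)"
    and bounded: "\<And>k x. k \<in> I \<Longrightarrow> \<bar>f k x\<bar> \<le> B k"
  shows "(\<integral>\<omega>. f i (\<omega> i) * f j (\<omega> j) \<partial>Pi\<^sub>M I M)
    = (if i = j then (\<integral>x. (f i x)^2 \<partial>M i) else (\<integral>x. f i x \<partial>M i) * (\<integral>x. f j x \<partial>M j))"
proof -
  have int_sq: "integrable (M k) (\<lambda>x. (f k x)^2)" and int: "integrable (M k) (f k)" if k: "k \<in> I" for k
  proof -
    have "\<bar>(f k x)^2\<bar> \<le> (B k)^2" for x
      using power_mono[OF bounded[OF k, of x], of 2] by simp
    moreover have "(\<lambda>x. (f k x)^2) \<in> borel_measurable (M k)"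
      using meas[OF k] by measurable
    ultimately show "integrable (M k) (\<lambda>x. (f k x)^2)"
      by (intro M.integrable_const_bound[where B="(B k)^2"]) auto
    show "integrable (M k) (f k)"
      using meas[OF k] bounded[OF k] by (intro M.integrable_const_bound[where B="B k"]) auto
  qed
  define g where "g k = (if k = i then (if i = j then (\<lambda>x. (f i x)^2) else f i)
    else if k = j then f j else (\<lambda>_. 1))" for k
  have g_other: "g k = (\<lambda>_. 1)" if "k \<noteq> i" "k \<noteq> j" for k
    using that unfolding g_def by simp
  have "integrable (M k) (g k)" if "k \<in> I" for k
    using that int_sq[OF that] int[OF that] unfolding g_def by auto
  then have "(\<integral>\<omega>. (\<Prod>k\<in>I. g k (\<omega> k)) \<partial>Pi\<^sub>M I M) = (\<Prod>k\<in>I. integral\<^sup>L (M k) (g k))"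
    by (intro product_integral_prod finite_index)
  moreover have "(\<Prod>k\<in>I. g k (\<omega> k)) = (if i = j then g i (\<omega> i) else g i (\<omega> i) * g j (\<omega> j))" for \<omega>
    using g_other by (intro prod_supported_on_two finite_index i j) simp
  moreover have "(\<Prod>k\<in>I. integral\<^sup>L (M k) (g k))
      = (if i = j then integral\<^sup>L (M i) (g i) else integral\<^sup>L (M i) (g i) * integral\<^sup>L (M j) (g j))"
    using g_other by (intro prod_supported_on_two finite_index i j) (simp add: M.prob_space)
  ultimately show ?thesis
    unfolding g_def by (cases "i = j") (simp_all add: power2_eq_square)
qed

lemma (in finite_product_prob_space) integral_square_sum_centered:
  fixes f :: "_ \<Rightarrow> _ \<Rightarrow> real"
  assumes meas: "\<And>i. i \<in> I \<Longrightarrow> f i \<in> borel_measurable (M i)"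
    and bounded: "\<And>i x. i \<in> I \<Longrightarrow> \<bar>f i x\<bar> \<le> B i"
    and centered: "\<And>i. i \<in> I \<Longrightarrow> (\<integral>x. f i x \<partial>M i) = 0"
  shows "(\<integral>\<omega>. (\<Sum>i\<in>I. f i (\<omega> i))^2 \<partial>Pi\<^sub>M I M) = (\<Sum>i\<in>I. \<integral>x. (f i x)^2 \<partial>M i)"
proof -
  have comp_meas: "(\<lambda>\<omega>. f i (\<omega> i)) \<in> borel_measurable (Pi\<^sub>M I M)" if "i \<in> I" for i
    using measurable_compose[OF measurable_component_singleton[of i I M] meas[of i]] that by blast
  have int: "integrable (Pi\<^sub>M I M) (\<lambda>\<omega>. f i (\<omega> i) * f j (\<omega> j))" if "i \<in> I" "j \<in> I" for i j
    using that comp_meas bounded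
    by (intro integrable_const_bound[where B="B i * B j"]) (auto simp: abs_mult intro!: mult_mono')
  have "(\<integral>\<omega>. (\<Sum>i\<in>I. f i (\<omega> i))^2 \<partial>Pi\<^sub>M I M)
      = (\<integral>\<omega>. (\<Sum>i\<in>I. \<Sum>j\<in>I. f i (\<omega> i) * f j (\<omega> j)) \<partial>Pi\<^sub>M I M)"
    by (simp add: power2_eq_square sum_product)
  also have "\<dots> = (\<Sum>i\<in>I. \<Sum>j\<in>I. \<integral>\<omega>. f i (\<omega> i) * f j (\<omega> j) \<partial>Pi\<^sub>M I M)"
    using int by (simp add: Bochner_Integration.integral_sum)
  also have "\<dots> = (\<Sum>i\<in>I. \<Sum>j\<in>I. if i = j then \<integral>x. (f i x)^2 \<partial>M i else 0)"
    using integral_product_components[OF _ _ meas bounded] centered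
    by (intro sum.cong refl) auto
  also have "\<dots> = (\<Sum>i\<in>I. \<integral>x. (f i x)^2 \<partial>M i)"
    using finite_index by simp
  finally show ?thesis .
qed

lemma (in finite_product_prob_space) nn_integral_square_sum_centered_le:
  fixes f :: "_ \<Rightarrow> _ \<Rightarrow> real"
  assumes meas: "\<And>i. i \<in> I \<Longrightarrow> f i \<in> borel_measurable (M i)"
    and bounded: "\<And>i x. i \<in> I \<Longrightarrow> \<bar>f i x\<bar> \<le> B i"
    and centered: "\<And>i. i \<in> I \<Longrightarrow> (\<integral>x. f i x \<partial>M i) = 0"
  shows "(\<integral>\<^sup>+\<omega>. ennreal ((\<Sum>i\<in>I. f i (\<omega> i))^2) \<partial>Pi\<^sub>M I M) \<le> ennreal (\<Sum>i\<in>I. (B i)^2)"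
proof -
  have "(\<lambda>\<omega>. f i (\<omega> i)) \<in> borel_measurable (Pi\<^sub>M I M)" if "i \<in> I" for i
    using measurable_compose[OF measurable_component_singleton[of i I M] meas[of i]] that by blast
  then have "(\<lambda>\<omega>. (\<Sum>i\<in>I. f i (\<omega> i))^2) \<in> borel_measurable (Pi\<^sub>M I M)"
    by (intro borel_measurable_power borel_measurable_sum) auto
  moreover have "\<bar>(\<Sum>i\<in>I. f i (\<omega> i))^2\<bar> \<le> (\<Sum>i\<in>I. B i)^2" for \<omega>
  proof -
    have "\<bar>\<Sum>i\<in>I. f i (\<omega> i)\<bar> \<le> (\<Sum>i\<in>I. B i)"
      using bounded by (intro order_trans[OF sum_abs sum_mono]) auto
    from power_mono[OF this abs_ge_zero, of 2] show ?thesis by (simp add: power_abs)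
  qed
  ultimately have "integrable (Pi\<^sub>M I M) (\<lambda>\<omega>. (\<Sum>i\<in>I. f i (\<omega> i))^2)"
    by (intro integrable_const_bound[where B="(\<Sum>i\<in>I. B i)^2"]) auto
  then have "(\<integral>\<^sup>+\<omega>. ennreal ((\<Sum>i\<in>I. f i (\<omega> i))^2) \<partial>Pi\<^sub>M I M)
      = ennreal (\<Sum>i\<in>I. \<integral>x. (f i x)^2 \<partial>M i)"
    by (simp add: nn_integral_eq_integral integral_square_sum_centered[OF meas bounded centered])
  also have "\<dots> \<le> ennreal (\<Sum>i\<in>I. (B i)^2)"
  proof (intro ennreal_leI sum_mono)
    fix i assume i: "i \<in> I"
    have "\<bar>(f i x)^2\<bar> \<le> (B i)^2" for x
      using power_mono[OF bounded[OF i, of x], of 2] by simp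
    moreover have "(\<lambda>x. (f i x)^2) \<in> borel_measurable (M i)"
      using meas[OF i] by measurable
    ultimately show "(\<integral>x. (f i x)^2 \<partial>M i) \<le> (B i)^2"
      by (intro M.integral_le_const M.integrable_const_bound[where B="(B i)^2"]) (auto simp: abs_le_iff)
  qed
  finally show ?thesis .
qed

lemma (in sigma_finite_measure) nn_integral_Tonelli3:
  fixes F :: "'a \<Rightarrow> real \<Rightarrow> real \<Rightarrow> ennreal"
  assumes F: "(\<lambda>((\<omega>, x), y). F \<omega> x y) \<in> borel_measurable ((M \<Otimes>\<^sub>M lborel) \<Otimes>\<^sub>M lborel)"
  shows "(\<integral>\<^sup>+\<omega>. \<integral>\<^sup>+x. \<integral>\<^sup>+y. F \<omega> x y \<partial>lborel \<partial>lborel \<partial>M)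
    = (\<integral>\<^sup>+x. \<integral>\<^sup>+y. \<integral>\<^sup>+\<omega>. F \<omega> x y \<partial>M \<partial>lborel \<partial>lborel)"
proof -
  interpret pair_sigma_finite M lborel ..
  have F3: "(\<lambda>(z, y). F (fst z) (snd z) y) \<in> borel_measurable ((M \<Otimes>\<^sub>M lborel) \<Otimes>\<^sub>M lborel)"
    using F by (simp add: case_prod_beta')
  have "(\<lambda>z. F (fst z) x (snd z)) \<in> borel_measurable (M \<Otimes>\<^sub>M lborel)" for x
  proof -
    have "(\<lambda>z. ((fst z, x), snd z)) \<in> measurable (M \<Otimes>\<^sub>M lborel) ((M \<Otimes>\<^sub>M lborel) \<Otimes>\<^sub>M lborel)"
      by measurable
    from measurable_compose[OF this F3] show ?thesis by simp
  qed
  then have F2: "(\<lambda>(\<omega>, y). F \<omega> x y) \<in> borel_measurable (M \<Otimes>\<^sub>M lborel)" for x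
    by (simp add: case_prod_beta')
  have "(\<lambda>z. \<integral>\<^sup>+y. F (fst z) (snd z) y \<partial>lborel) \<in> borel_measurable (M \<Otimes>\<^sub>M lborel)"
    using F3 by (rule lborel.borel_measurable_nn_integral)
  then have F2': "(\<lambda>(\<omega>, x). \<integral>\<^sup>+y. F \<omega> x y \<partial>lborel) \<in> borel_measurable (M \<Otimes>\<^sub>M lborel)"
    by (simp add: case_prod_beta')
  have "(\<integral>\<^sup>+\<omega>. \<integral>\<^sup>+x. \<integral>\<^sup>+y. F \<omega> x y \<partial>lborel \<partial>lborel \<partial>M)
      = (\<integral>\<^sup>+x. \<integral>\<^sup>+\<omega>. \<integral>\<^sup>+y. F \<omega> x y \<partial>lborel \<partial>M \<partial>lborel)"
    using Fubini'[OF F2'] by simp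
  also have "\<dots> = (\<integral>\<^sup>+x. \<integral>\<^sup>+y. \<integral>\<^sup>+\<omega>. F \<omega> x y \<partial>M \<partial>lborel \<partial>lborel)"
    by (intro nn_integral_cong Fubini'[symmetric] F2)
  finally show ?thesis .
qed

lemma (in sigma_finite_measure) nn_integral_weighted_square_le:
  fixes D :: "'a \<Rightarrow> real \<Rightarrow> real \<Rightarrow> real" and w :: "real \<Rightarrow> real"
  assumes D_meas: "(\<lambda>((\<omega>, x), y). D \<omega> x y) \<in> borel_measurable ((M \<Otimes>\<^sub>M lborel) \<Otimes>\<^sub>M lborel)"
    and [measurable]: "w \<in> borel_measurable borel" and w_nonneg: "\<And>x. 0 \<le> w x"
    and mean_square: "\<And>x y. (\<integral>\<^sup>+\<omega>. ennreal ((D \<omega> x y)^2) \<partial>M) \<le> V"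
  shows "(\<integral>\<^sup>+\<omega>. \<integral>\<^sup>+x. \<integral>\<^sup>+y. ennreal (w x * w y * (D \<omega> x y)^2) \<partial>lborel \<partial>lborel \<partial>M)
    \<le> (\<integral>\<^sup>+x. ennreal (w x) \<partial>lborel)^2 * V"
proof -
  have D_triple[measurable]: "(\<lambda>z. D (fst (fst z)) (snd (fst z)) (snd z))
      \<in> borel_measurable ((M \<Otimes>\<^sub>M lborel) \<Otimes>\<^sub>M lborel)"
    using D_meas by (simp add: case_prod_beta')
  then have "(\<lambda>((\<omega>, x), y). ennreal (w x * w y * (D \<omega> x y)^2))
      \<in> borel_measurable ((M \<Otimes>\<^sub>M lborel) \<Otimes>\<^sub>M lborel)"
    unfolding case_prod_beta' by measurable
  then have "(\<integral>\<^sup>+\<omega>. \<integral>\<^sup>+x. \<integral>\<^sup>+y. ennreal (w x * w y * (D \<omega> x y)^2) \<partial>lborel \<partial>lborel \<partial>M)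
      = (\<integral>\<^sup>+x. \<integral>\<^sup>+y. \<integral>\<^sup>+\<omega>. ennreal (w x * w y * (D \<omega> x y)^2) \<partial>M \<partial>lborel \<partial>lborel)"
    by (rule nn_integral_Tonelli3)
  also have "\<dots> \<le> (\<integral>\<^sup>+x. \<integral>\<^sup>+y. ennreal (w x) * (V * ennreal (w y)) \<partial>lborel \<partial>lborel)"
  proof (intro nn_integral_mono)
    fix x y :: real
    have "(\<lambda>\<omega>. ((\<omega>, x), y)) \<in> measurable M ((M \<Otimes>\<^sub>M lborel) \<Otimes>\<^sub>M lborel)"
      by measurable
    from measurable_compose[OF this D_triple]
    have [measurable]: "(\<lambda>\<omega>. D \<omega> x y) \<in> borel_measurable M" by simp
    have "(\<integral>\<^sup>+\<omega>. ennreal (w x * w y * (D \<omega> x y)^2) \<partial>M)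
        = ennreal (w x * w y) * (\<integral>\<^sup>+\<omega>. ennreal ((D \<omega> x y)^2) \<partial>M)"
      using w_nonneg
      by (subst nn_integral_cmult[symmetric]) (auto simp: ennreal_mult[symmetric] intro!: nn_integral_cong)
    also have "\<dots> \<le> ennreal (w x * w y) * V"
      using mean_square by (intro mult_left_mono) auto
    finally show "(\<integral>\<^sup>+\<omega>. ennreal (w x * w y * (D \<omega> x y)^2) \<partial>M) \<le> ennreal (w x) * (V * ennreal (w y))"
      using w_nonneg by (simp add: ennreal_mult mult_ac)
  qed
  also have "\<dots> = (\<integral>\<^sup>+x. ennreal (w x) * (V * (\<integral>\<^sup>+y. ennreal (w y) \<partial>lborel)) \<partial>lborel)"
    by (simp add: nn_integral_cmult)
  also have "\<dots> = (\<integral>\<^sup>+x. ennreal (w x) \<partial>lborel)^2 * V"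
    by (subst nn_integral_multc) (auto simp: power2_eq_square mult_ac)
  finally show ?thesis .
qed

lemma set_integral_reflect:
  fixes f :: "real \<Rightarrow> real"
  shows "(LINT \<mu>:{a<..b}|lborel. f \<mu>) = (LINT \<mu>:{-b..<-a}|lborel. f (-\<mu>))"
proof -
  have "(LINT \<mu>:{a<..b}|lborel. f \<mu>)
      = \<bar>-1\<bar> *\<^sub>R (\<integral>\<mu>. indicator {a<..b} (0 + -1*\<mu>) *\<^sub>R f (0 + -1*\<mu>) \<partial>lborel)"
    unfolding set_lebesgue_integral_def by (rule lborel_integral_real_affine) simp
  also have "\<dots> = (LINT \<mu>:{-b..<-a}|lborel. f (-\<mu>))"
    unfolding set_lebesgue_integral_def
    by (simp, intro Bochner_Integration.integral_cong) (auto simp: indicator_def)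
  finally show ?thesis .
qed

lemma divide_cube_le_log_powr:
  fixes n C :: real
  assumes "1 \<le> n" "0 \<le> C"
  shows "C / n^3 \<le> C * (ln n + 1) * n powr (-3)"
proof -
  have "C / n^3 \<le> C * (ln n + 1) / n^3"
    using assms by (intro divide_right_mono mult_le_cancel_left1[THEN iffD2]) auto
  also have "\<dots> = C * (ln n + 1) * n powr (-3)"
    using assms by (simp add: powr_minus powr_realpow divide_inverse)
  finally show ?thesis .
qed

locale transport_slab =
  fixes xL xR :: real and sT sS :: "real \<Rightarrow> real" and \<delta> :: real
  assumes xL_less_xR: "xL < xR"
    and sT_cont: "continuous_on {xL..xR} sT" and sS_cont: "continuous_on {xL..xR} sS"
    and cross_sections_pos: "\<forall>x\<in>{xL..xR}. 0 < sS x \<and> 0 < sT x"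
    and delta_pos: "0 < \<delta>" and delta_less_1: "\<delta> < 1"
begin

text \<open>
  Clamping to \<open>[xL, xR]\<close> extends the optical depth and the ratio \<open>\<sigma>\<^sub>r/\<sigma>\<^sub>T\<close> continuously
  to all of \<open>\<real>\<close>.
\<close>

definition clamp :: "real \<Rightarrow> real" where "clamp z = max xL (min xR z)"
definition depth :: "real \<Rightarrow> real" where "depth z = integral {xL..clamp z} sT"
definition total_depth :: real where "total_depth = integral {xL..xR} sT"
definition ratio :: "real \<Rightarrow> real" where
  "ratio z = sS (clamp z) / (lam xL xR sT sS * sT (clamp z))"
definition attenuation :: "real \<Rightarrow> real \<Rightarrow> real" where
  "attenuation \<nu> I = (1/\<nu>) * exp (-(I/\<nu>))"
definition kernel :: "real \<Rightarrow> real \<Rightarrow> real \<Rightarrow> real" where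
  "kernel \<mu> x y =
    (if 0 < \<mu> then (if y \<le> x then attenuation \<mu> (depth x - depth y) * ratio y else 0)
     else if \<mu> < 0 then (if x \<le> y then attenuation (-\<mu>) (depth y - depth x) * ratio y else 0)
     else 0)"

lemma clamp_in: "clamp z \<in> {xL..xR}" using xL_less_xR by (auto simp: clamp_def)
lemma clamp_id: "z \<in> {xL..xR} \<Longrightarrow> clamp z = z" by (auto simp: clamp_def)
lemma clamp_mono: "u \<le> v \<Longrightarrow> clamp u \<le> clamp v" by (auto simp: clamp_def)
lemma continuous_on_clamp: "continuous_on UNIV clamp"
  unfolding clamp_def by (intro continuous_intros)

lemma sT_pos: "x \<in> {xL..xR} \<Longrightarrow> 0 < sT x" using cross_sections_pos by blast
lemma sS_pos: "x \<in> {xL..xR} \<Longrightarrow> 0 < sS x" using cross_sections_pos by blast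
lemma sT_nonzero: "x \<in> {xL..xR} \<Longrightarrow> sT x \<noteq> 0" using sT_pos by force

lemma ratio_le_lam: "x \<in> {xL..xR} \<Longrightarrow> sS x / sT x \<le> lam xL xR sT sS"
proof -
  have "continuous_on {xL..xR} (\<lambda>x. sS x / sT x)"
    using sT_cont sS_cont sT_nonzero by (intro continuous_intros) auto
  then have "compact ((\<lambda>x. sS x / sT x) ` {xL..xR})"
    by (intro compact_continuous_image) auto
  then have "bdd_above ((\<lambda>x. sS x / sT x) ` {xL..xR})"
    by (intro bounded_imp_bdd_above compact_imp_bounded)
  then show "x \<in> {xL..xR} \<Longrightarrow> sS x / sT x \<le> lam xL xR sT sS"
    unfolding lam_def by (intro cSUP_upper) auto
qed

lemma lam_pos: "0 < lam xL xR sT sS"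
proof -
  have "0 < sS xL / sT xL" using sT_pos[of xL] sS_pos[of xL] xL_less_xR by simp
  then show ?thesis using ratio_le_lam[of xL] xL_less_xR by simp
qed

lemma ratio_pos: "0 < ratio z"
  using clamp_in sT_pos sS_pos lam_pos unfolding ratio_def by auto

lemma ratio_le_1: "ratio z \<le> 1"
  using ratio_le_lam[OF clamp_in] sT_pos[OF clamp_in] lam_pos
  unfolding ratio_def by (auto simp: field_simps)

lemma continuous_on_ratio: "continuous_on UNIV ratio"
proof -
  have "continuous_on {xL..xR} (\<lambda>u. sS u / (lam xL xR sT sS * sT u))"
    using sT_cont sS_cont sT_nonzero lam_pos by (intro continuous_intros) auto
  then show ?thesis
    unfolding ratio_def
    by (rule continuous_on_compose2[OF _ continuous_on_clamp]) (use clamp_in in auto)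
qed

lemma sigr_div_sT: "y \<in> {xL..xR} \<Longrightarrow> sigr xL xR sT sS y / sT y = ratio y"
  unfolding sigr_def ratio_def by (simp add: clamp_id)

lemma integrable_on_sT: "{u..v} \<subseteq> {xL..xR} \<Longrightarrow> sT integrable_on {u..v}"
  using sT_cont by (meson continuous_on_subset integrable_continuous_interval)

lemma continuous_on_depth: "continuous_on UNIV depth"
proof -
  have "continuous_on {xL..xR} (\<lambda>z. integral {xL..z} sT)"
    using integrable_on_sT by (intro indefinite_integral_continuous_1) auto
  then show ?thesis
    unfolding depth_def
    by (rule continuous_on_compose2[OF _ continuous_on_clamp]) (use clamp_in in auto)
qed

lemma integral_sT_nonneg: "{u..v} \<subseteq> {xL..xR} \<Longrightarrow> 0 \<le> integral {u..v} sT"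
  using integrable_on_sT sT_pos by (intro integral_nonneg) (auto intro: less_imp_le)

lemma integral_sT_split:
  assumes "xL \<le> u" "u \<le> v" "v \<le> xR"
  shows "integral {u..v} sT = integral {xL..v} sT - integral {xL..u} sT"
  using Henstock_Kurzweil_Integration.integral_combine[OF assms(1,2) integrable_on_sT] assms
  by auto

lemma depth_diff: "u \<le> v \<Longrightarrow> depth v - depth u = integral {clamp u..clamp v} sT"
  unfolding depth_def using integral_sT_split[OF _ clamp_mono] clamp_in by auto

lemma depth_diff_range: "u \<le> v \<Longrightarrow> 0 \<le> depth v - depth u \<and> depth v - depth u \<le> total_depth"
proof -
  assume "u \<le> v"
  have "depth v - depth u \<le> integral {clamp u..xR} sT"
    using depth_diff[OF \<open>u \<le> v\<close>] integral_sT_split[of "clamp u" "clamp v"]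
      integral_sT_split[of "clamp u" xR] integral_sT_split[of "clamp v" xR]
      integral_sT_nonneg[of "clamp v" xR] clamp_in clamp_mono[OF \<open>u \<le> v\<close>] by auto
  also have "\<dots> \<le> total_depth"
    using integral_sT_split[of "clamp u" xR] integral_sT_nonneg[of xL "clamp u"] clamp_in
    unfolding total_depth_def by auto
  finally show ?thesis
    using depth_diff[OF \<open>u \<le> v\<close>] integral_sT_nonneg clamp_in clamp_mono[OF \<open>u \<le> v\<close>] by auto
qed

lemma total_depth_nonneg: "0 \<le> total_depth"
  using depth_diff_range[of 0 0] by simp

lemma set_integral_sT: assumes "x \<in> {xL..xR}" "y \<in> {xL..xR}" "y \<le> x"
  shows "(LINT s:{y..x}|lborel. sT s) = depth x - depth y"
proof -
  have sub: "{y..x} \<subseteq> {xL..xR}" using assms by auto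
  have "set_integrable lborel {y..x} sT"
    unfolding set_integrable_def
    by (rule borel_integrable_compact) (use continuous_on_subset[OF sT_cont sub] in auto)
  then have "(LINT s:{y..x}|lborel. sT s) = integral {y..x} sT"
    by (rule set_borel_integral_eq_integral)
  then show ?thesis using depth_diff[of y x] assms by (simp add: clamp_id)
qed

lemma kern_eq_kernel: assumes "x \<in> {xL..xR}" "y \<in> {xL..xR}"
  shows "kern xL xR sT sS \<mu> x y = kernel \<mu> x y"
  using set_integral_sT[OF assms] set_integral_sT[OF assms(2,1)] sigr_div_sT[OF assms(2)]
  unfolding kern_def kernel_def attenuation_def by (auto simp: field_simps)

lemma abs_kernel_le: "\<bar>kernel \<mu> x y\<bar> \<le> 1 / \<bar>\<mu>\<bar>"
proof -
  have bound: "\<bar>attenuation \<nu> I * ratio y\<bar> \<le> 1/\<nu>" if "0 < \<nu>" "0 \<le> I" for \<nu> I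
  proof -
    have a: "attenuation \<nu> I \<le> 1/\<nu>" "0 \<le> attenuation \<nu> I"
      using that unfolding attenuation_def by (auto simp: divide_simps)
    have "\<bar>attenuation \<nu> I * ratio y\<bar> \<le> attenuation \<nu> I * 1"
      using a ratio_pos[of y] mult_left_mono[OF ratio_le_1[of y] a(2)] by (simp add: abs_mult)
    then show ?thesis using a by simp
  qed
  show ?thesis
    unfolding kernel_def
    using bound[of \<mu> "depth x - depth y"] bound[of "-\<mu>" "depth y - depth x"]
      depth_diff_range[of y x] depth_diff_range[of x y]
    by (auto simp: abs_if)
qed

lemma depth_measurable[measurable]: "depth \<in> borel_measurable borel"
  using continuous_on_depth by (rule borel_measurable_continuous_onI)

lemma ratio_measurable[measurable]: "ratio \<in> borel_measurable borel"
  using continuous_on_ratio by (rule borel_measurable_continuous_onI)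

lemma kernel_measurable[measurable (raw)]:
  assumes "f \<in> borel_measurable M" "g \<in> borel_measurable M" "h \<in> borel_measurable M"
  shows "(\<lambda>z. kernel (f z) (g z) (h z)) \<in> borel_measurable M"
  unfolding kernel_def attenuation_def using assms by measurable

definition lipschitz_const :: real where "lipschitz_const = 1/\<delta>^2 + total_depth/\<delta>^3"

lemma lipschitz_const_nonneg: "0 \<le> lipschitz_const"
  unfolding lipschitz_const_def using delta_pos total_depth_nonneg by auto

lemma attenuation_has_derivative:
  "0 < z \<Longrightarrow> ((\<lambda>\<nu>. attenuation \<nu> I) has_real_derivative exp (-(I/z)) * (I/z - 1) / z^2) (at z)"
  unfolding attenuation_def by (auto intro!: derivative_eq_intros simp: power2_eq_square field_simps)

lemma abs_attenuation_derivative_le: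
  assumes "\<delta> \<le> z" "0 \<le> I" "I \<le> total_depth"
  shows "\<bar>exp (-(I/z)) * (I/z - 1) / z^2\<bar> \<le> lipschitz_const"
proof -
  have z: "0 < z" using assms delta_pos by linarith
  have "0 \<le> I/z" using z assms by simp
  then have "\<bar>exp (-(I/z)) * (I/z - 1)\<bar> \<le> 1 * (I/z + 1)"
    unfolding abs_mult using z by (intro mult_mono) auto
  then have "\<bar>exp (-(I/z)) * (I/z - 1) / z^2\<bar> \<le> 1 * (I/z + 1) / z^2"
    by (simp add: divide_right_mono)
  also have "\<dots> = 1/z^2 + I/z^3" using z by (simp add: field_simps power2_eq_square power3_eq_cube)
  also have "\<dots> \<le> 1/\<delta>^2 + total_depth/\<delta>^3"
  proof (intro add_mono)
    show "1/z^2 \<le> 1/\<delta>^2" using assms delta_pos by (intro divide_left_mono power_mono) auto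
    have "I/z^3 \<le> total_depth/z^3" using assms z by (intro divide_right_mono) auto
    also have "\<dots> \<le> total_depth/\<delta>^3"
      using assms delta_pos total_depth_nonneg by (intro divide_left_mono power_mono) auto
    finally show "I/z^3 \<le> total_depth/\<delta>^3" .
  qed
  finally show ?thesis unfolding lipschitz_const_def .
qed

lemma attenuation_lipschitz:
  assumes "\<delta> \<le> a" "\<delta> \<le> b" "0 \<le> I" "I \<le> total_depth"
  shows "\<bar>attenuation b I - attenuation a I\<bar> \<le> lipschitz_const * \<bar>b - a\<bar>"
proof -
  have *: "\<bar>attenuation v I - attenuation u I\<bar> \<le> lipschitz_const * (v - u)"
    if "\<delta> \<le> u" "u < v" for u v
  proof -
    have "\<And>z. u \<le> z \<Longrightarrow> z \<le> v \<Longrightarrow>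
        ((\<lambda>\<nu>. attenuation \<nu> I) has_real_derivative exp (-(I/z)) * (I/z - 1) / z^2) (at z)"
      using that delta_pos by (intro attenuation_has_derivative) linarith
    from MVT2[OF \<open>u < v\<close> this] obtain z where "u < z"
      and z: "attenuation v I - attenuation u I = (v - u) * (exp (-(I/z)) * (I/z - 1) / z^2)"
      by blast
    define d where "d = exp (-(I/z)) * (I/z - 1) / z^2"
    have "\<bar>d\<bar> \<le> lipschitz_const"
      unfolding d_def using \<open>u < z\<close> assms that by (intro abs_attenuation_derivative_le) auto
    then show ?thesis
      unfolding z d_def[symmetric] using that by (simp add: abs_mult mult.commute mult_left_mono)
  qed
  show ?thesis
    using *[of a b] *[of b a] assms by (cases a b rule: linorder_cases) (auto simp: abs_minus_commute)
qed

definition sym_kernel :: "real \<Rightarrow> real \<Rightarrow> real \<Rightarrow> real" where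
  "sym_kernel x y \<mu> = kernel \<mu> x y + kernel (-\<mu>) x y"

lemma sym_kernel_lipschitz:
  assumes "\<mu>1 \<le> -\<delta>" "\<mu>2 \<le> -\<delta>"
  shows "\<bar>sym_kernel x y \<mu>1 - sym_kernel x y \<mu>2\<bar> \<le> 2 * lipschitz_const * \<bar>\<mu>1 - \<mu>2\<bar>"
proof -
  have neg: "\<mu>1 < 0" "\<mu>2 < 0" using assms delta_pos by auto
  have one: "\<bar>attenuation (-\<mu>1) I * ratio y - attenuation (-\<mu>2) I * ratio y\<bar>
      \<le> lipschitz_const * \<bar>\<mu>1 - \<mu>2\<bar>" if "0 \<le> I" "I \<le> total_depth" for I
  proof -
    have "\<bar>attenuation (-\<mu>1) I * ratio y - attenuation (-\<mu>2) I * ratio y\<bar>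
        = \<bar>attenuation (-\<mu>1) I - attenuation (-\<mu>2) I\<bar> * ratio y"
      using ratio_pos[of y] by (simp add: left_diff_distrib[symmetric] abs_mult)
    also have "\<dots> \<le> \<bar>attenuation (-\<mu>1) I - attenuation (-\<mu>2) I\<bar>"
      using ratio_le_1[of y] by (simp add: mult_left_le)
    also have "\<dots> \<le> lipschitz_const * \<bar>\<mu>1 - \<mu>2\<bar>"
      using attenuation_lipschitz[of "-\<mu>2" "-\<mu>1" I] that assms by (simp add: abs_minus_commute)
    finally show ?thesis .
  qed
  have "\<bar>kernel \<mu>1 x y - kernel \<mu>2 x y\<bar> \<le> lipschitz_const * \<bar>\<mu>1 - \<mu>2\<bar>"
    using neg one[of "depth y - depth x"] depth_diff_range[of x y] lipschitz_const_nonneg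
    unfolding kernel_def by auto
  moreover have "\<bar>kernel (-\<mu>1) x y - kernel (-\<mu>2) x y\<bar> \<le> lipschitz_const * \<bar>\<mu>1 - \<mu>2\<bar>"
    using neg one[of "depth x - depth y"] depth_diff_range[of y x] lipschitz_const_nonneg
    unfolding kernel_def by auto
  ultimately show ?thesis unfolding sym_kernel_def by linarith
qed

lemma abs_kernel_le_inv_delta: "\<delta> \<le> \<bar>\<mu>\<bar> \<Longrightarrow> \<bar>kernel \<mu> x y\<bar> \<le> 1/\<delta>"
  using abs_kernel_le[of \<mu> x y] divide_left_mono[of \<delta> "\<bar>\<mu>\<bar>" 1] delta_pos by simp

lemma set_integrable_kernel:
  assumes A: "A \<in> sets borel" "emeasure lborel A < \<infinity>" and abs_ge: "\<And>\<mu>. \<mu> \<in> A \<Longrightarrow> \<delta> \<le> \<bar>\<mu>\<bar>"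
  shows "set_integrable lborel A (\<lambda>\<mu>. kernel \<mu> x y)" "set_integrable lborel A (\<lambda>\<mu>. kernel (-\<mu>) x y)"
proof -
  have "(\<lambda>\<mu>. kernel (c * \<mu>) x y) \<in> borel_measurable lborel" for c :: real
    by measurable
  moreover have "AE \<mu> in lborel. \<mu> \<in> A \<longrightarrow> norm (kernel (c * \<mu>) x y) \<le> 1/\<delta>" if "\<bar>c\<bar> = 1" for c
    using abs_kernel_le_inv_delta abs_ge that by (simp add: abs_mult)
  ultimately have "set_integrable lborel A (\<lambda>\<mu>. kernel (c * \<mu>) x y)" if "\<bar>c\<bar> = 1" for c
    unfolding set_integrable_def using A that by (intro integrableI_bounded_set_indicator) auto
  from this[of 1] this[of "-1"] show "set_integrable lborel A (\<lambda>\<mu>. kernel \<mu> x y)"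
    "set_integrable lborel A (\<lambda>\<mu>. kernel (-\<mu>) x y)" by simp_all
qed

definition velocity_measure :: real where "velocity_measure = measure lborel (Svel \<delta>)"
definition mean_kernel :: "real \<Rightarrow> real \<Rightarrow> real" where
  "mean_kernel x y = (1/velocity_measure) * (LINT \<mu>:Svel \<delta>|lborel. kernel \<mu> x y)"
definition weight :: "real \<Rightarrow> real" where "weight x = indicator {xL..xR} x * sT x"
definition error_kernel :: "nat \<Rightarrow> (nat \<Rightarrow> real) \<Rightarrow> (nat \<Rightarrow> real) \<Rightarrow> real \<Rightarrow> real \<Rightarrow> real" where
  "error_kernel m t \<mu>s x y = (\<Sum>l<m. omega \<delta> t l * sym_kernel x y (\<mu>s l)) - mean_kernel x y"

lemma Svel_sets[measurable]: "Svel \<delta> \<in> sets borel"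
  unfolding Svel_def by auto

lemma emeasure_Svel_finite: "emeasure lborel (Svel \<delta>) < \<infinity>"
proof -
  have "emeasure lborel (Svel \<delta>) \<le> emeasure lborel {-1..1::real}"
    unfolding Svel_def using delta_pos by (intro emeasure_mono) auto
  then show ?thesis by (simp add: le_less_trans)
qed

lemma velocity_measure_eq: "velocity_measure = 2 * (1 - \<delta>)"
proof -
  have "velocity_measure = measure lborel {-1..<-\<delta>} + measure lborel {\<delta><..1}"
    unfolding velocity_measure_def Svel_def using delta_pos delta_less_1 by (intro measure_Union) auto
  then show ?thesis using delta_less_1 by simp
qed

lemma velocity_measure_pos: "0 < velocity_measure"
  using velocity_measure_eq delta_less_1 by simp

lemma Svel_abs_ge: "\<mu> \<in> Svel \<delta> \<Longrightarrow> \<delta> \<le> \<bar>\<mu>\<bar>"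
  unfolding Svel_def by auto

lemma mean_kernel_measurable[measurable (raw)]:
  assumes [measurable]: "f \<in> borel_measurable M" "g \<in> borel_measurable M"
  shows "(\<lambda>z. mean_kernel (f z) (g z)) \<in> borel_measurable M"
  unfolding mean_kernel_def set_lebesgue_integral_def by measurable

lemma abs_mean_kernel_le: "\<bar>mean_kernel x y\<bar> \<le> 1/\<delta>"
proof -
  have int: "integrable lborel (\<lambda>\<mu>. indicator (Svel \<delta>) \<mu> *\<^sub>R kernel \<mu> x y)"
    using set_integrable_kernel(1)[OF Svel_sets emeasure_Svel_finite Svel_abs_ge]
    unfolding set_integrable_def .
  have pointwise: "norm (indicator (Svel \<delta>) \<mu> *\<^sub>R kernel \<mu> x y) \<le> (1/\<delta>) * indicator (Svel \<delta>) \<mu>" for \<mu>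
    using abs_kernel_le_inv_delta[OF Svel_abs_ge, of \<mu> x y] by (cases "\<mu> \<in> Svel \<delta>") auto
  have "\<bar>LINT \<mu>:Svel \<delta>|lborel. kernel \<mu> x y\<bar> \<le> (\<integral>\<mu>. norm (indicator (Svel \<delta>) \<mu> *\<^sub>R kernel \<mu> x y) \<partial>lborel)"
    unfolding set_lebesgue_integral_def by (metis integral_norm_bound real_norm_def)
  also have "\<dots> \<le> (\<integral>\<mu>. (1/\<delta>) * indicator (Svel \<delta>) \<mu> \<partial>lborel)"
    using int emeasure_Svel_finite pointwise by (intro integral_mono) auto
  also have "\<dots> = velocity_measure / \<delta>"
    using emeasure_Svel_finite unfolding velocity_measure_def by (simp add: less_top[symmetric])
  finally show ?thesis
    unfolding mean_kernel_def using velocity_measure_pos by (simp add: abs_mult field_simps)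
qed

lemma weight_measurable[measurable]: "weight \<in> borel_measurable borel"
  using borel_measurable_continuous_on_indicator[OF _ sT_cont] unfolding weight_def by simp

lemma weight_nonneg: "0 \<le> weight x"
  unfolding weight_def using sT_pos by (auto simp: indicator_def less_imp_le)

lemma integrable_weight: "integrable lborel weight"
  using borel_integrable_compact[OF _ sT_cont] unfolding weight_def by simp

lemma L2w_integrable:
  assumes "\<phi> \<in> L2w xL xR sT"
  shows "integrable lborel (\<lambda>y. (\<phi> y)^2 * weight y)" "integrable lborel (\<lambda>y. \<phi> y * weight y)"
proof -
  have [measurable]: "\<phi> \<in> borel_measurable borel" using assms unfolding L2w_def by auto
  have "integrable lborel (\<lambda>x. indicator {xL..xR} x *\<^sub>R ((\<phi> x)^2 * sT x))"
    using assms unfolding L2w_def set_integrable_def by auto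
  then show sq: "integrable lborel (\<lambda>y. (\<phi> y)^2 * weight y)"
    unfolding weight_def by (simp add: mult_ac)
  have "\<bar>\<phi> y\<bar> \<le> (\<phi> y)^2 + 1" for y
  proof (cases "\<bar>\<phi> y\<bar> \<le> 1")
    case False
    then have "\<bar>\<phi> y\<bar> * 1 \<le> \<bar>\<phi> y\<bar> * \<bar>\<phi> y\<bar>" by (intro mult_left_mono) auto
    then show ?thesis by (simp add: power2_eq_square)
  qed (use zero_le_power2[of "\<phi> y"] in linarith)
  then have "\<bar>\<phi> y\<bar> * weight y \<le> ((\<phi> y)^2 + 1) * weight y" for y
    using weight_nonneg by (intro mult_right_mono)
  then have bound: "norm (\<phi> y * weight y) \<le> norm ((\<phi> y)^2 * weight y + weight y)" for y
    using weight_nonneg[of y] by (simp add: abs_mult distrib_right)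
  show "integrable lborel (\<lambda>y. \<phi> y * weight y)"
  proof (rule Bochner_Integration.integrable_bound[of _ "\<lambda>y. (\<phi> y)^2 * weight y + weight y"])
    show "integrable lborel (\<lambda>y. (\<phi> y)^2 * weight y + weight y)"
      using sq integrable_weight by simp
    show "(\<lambda>y. \<phi> y * weight y) \<in> borel_measurable lborel" by measurable
  qed (use bound in simp)
qed

lemma Aop_eq_integral: "x \<in> {xL..xR} \<Longrightarrow>
    Aop xL xR sT sS \<mu> \<phi> x = (\<integral>y. kernel \<mu> x y * (\<phi> y * weight y) \<partial>lborel)"
  unfolding Aop_def set_lebesgue_integral_def
  by (intro Bochner_Integration.integral_cong) (auto simp: weight_def kern_eq_kernel indicator_def)

lemma Tavg_eq_integral:
  assumes x: "x \<in> {xL..xR}" and \<phi>: "\<phi> \<in> L2w xL xR sT"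
  shows "Tavg xL xR sT sS \<delta> \<phi> x = (\<integral>y. mean_kernel x y * (\<phi> y * weight y) \<partial>lborel)"
proof -
  define g where "g y = \<phi> y * weight y" for y
  have g: "integrable lborel g" using L2w_integrable[OF \<phi>] unfolding g_def by auto
  then have [measurable]: "g \<in> borel_measurable borel" by auto
  define F where "F = (\<lambda>(\<mu>, y). indicator (Svel \<delta>) \<mu> * kernel \<mu> x y * g y)"
  have "integrable (lborel \<Otimes>\<^sub>M lborel) (\<lambda>z. ((1/\<delta>) * indicator (Svel \<delta>) (fst z)) * \<bar>g (snd z)\<bar>)"
    using emeasure_Svel_finite g by (intro lborel_pair.integrable_product_of_integrable) auto
  then have F: "integrable (lborel \<Otimes>\<^sub>M lborel) F"
  proof (rule Bochner_Integration.integrable_bound)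
    show "F \<in> borel_measurable (lborel \<Otimes>\<^sub>M lborel)" unfolding F_def by measurable
    show "AE z in lborel \<Otimes>\<^sub>M lborel. norm (F z)
        \<le> norm ((1/\<delta>) * indicator (Svel \<delta>) (fst z) * \<bar>g (snd z)\<bar>)"
    proof (intro AE_I2)
      fix z :: "real \<times> real"
      obtain \<mu> y where z: "z = (\<mu>, y)" by fastforce
      have "\<bar>indicator (Svel \<delta>) \<mu> * kernel \<mu> x y\<bar> \<le> (1/\<delta>) * indicator (Svel \<delta>) \<mu>"
        using abs_kernel_le_inv_delta[OF Svel_abs_ge, of \<mu> x y] by (cases "\<mu> \<in> Svel \<delta>") auto
      then have "\<bar>indicator (Svel \<delta>) \<mu> * kernel \<mu> x y\<bar> * \<bar>g y\<bar> \<le> (1/\<delta>) * indicator (Svel \<delta>) \<mu> * \<bar>g y\<bar>"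
        by (rule mult_right_mono) simp
      then show "norm (F z) \<le> norm ((1/\<delta>) * indicator (Svel \<delta>) (fst z) * \<bar>g (snd z)\<bar>)"
        unfolding F_def z using delta_pos by (simp add: abs_mult)
    qed
  qed
  have "(LINT \<mu>:Svel \<delta>|lborel. Aop xL xR sT sS \<mu> \<phi> x) = (\<integral>\<mu>. \<integral>y. F (\<mu>, y) \<partial>lborel \<partial>lborel)"
    unfolding set_lebesgue_integral_def Aop_eq_integral[OF x] F_def g_def
    by (simp add: mult.assoc)
  also have "\<dots> = (\<integral>y. \<integral>\<mu>. F (\<mu>, y) \<partial>lborel \<partial>lborel)"
    using lborel_pair.Fubini_integral[OF F[unfolded F_def]] unfolding F_def by simp
  also have "\<dots> = (\<integral>y. (LINT \<mu>:Svel \<delta>|lborel. kernel \<mu> x y) * g y \<partial>lborel)"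
    unfolding set_lebesgue_integral_def F_def by simp
  finally show ?thesis
    unfolding Tavg_def mean_kernel_def velocity_measure_def g_def by (simp add: mult.assoc)
qed

lemma dTxi_eq_integral:
  assumes x: "x \<in> {xL..xR}" and \<phi>: "\<phi> \<in> L2w xL xR sT"
  shows "dTxi xL xR sT sS \<delta> m t \<mu>s \<phi> x = (\<integral>y. error_kernel m t \<mu>s x y * (\<phi> y * weight y) \<partial>lborel)"
proof -
  define g where "g y = \<phi> y * weight y" for y
  have g: "integrable lborel g" using L2w_integrable[OF \<phi>] unfolding g_def by auto
  have int: "integrable lborel (\<lambda>y. kernel \<mu> x y * g y)" "integrable lborel (\<lambda>y. mean_kernel x y * g y)"
    for \<mu>
    using g abs_kernel_le abs_mean_kernel_le by (auto intro!: integrable_mult_bounded)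
  have "(\<integral>y. error_kernel m t \<mu>s x y * g y \<partial>lborel) =
    (\<integral>y. (\<Sum>l<m. omega \<delta> t l * (kernel (\<mu>s l) x y * g y) + omega \<delta> t l * (kernel (- \<mu>s l) x y * g y))
      - mean_kernel x y * g y \<partial>lborel)"
    unfolding error_kernel_def sym_kernel_def
    by (intro Bochner_Integration.integral_cong refl) (simp add: sum_distrib_left sum_distrib_right algebra_simps)
  also have "\<dots> = (\<Sum>l<m. omega \<delta> t l * (\<integral>y. kernel (\<mu>s l) x y * g y \<partial>lborel)
      + omega \<delta> t l * (\<integral>y. kernel (- \<mu>s l) x y * g y \<partial>lborel)) - (\<integral>y. mean_kernel x y * g y \<partial>lborel)"
    using int by (simp add: Bochner_Integration.integral_sum)
  also have "\<dots> = dTxi xL xR sT sS \<delta> m t \<mu>s \<phi> x"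
    unfolding dTxi_def Txi_def Tavg_eq_integral[OF x \<phi>] Aop_eq_integral[OF x] g_def
    by (simp add: algebra_simps)
  finally show ?thesis unfolding g_def ..
qed

lemma error_kernel_measurable[measurable (raw)]:
  assumes "\<And>l. l < m \<Longrightarrow> (\<lambda>z. F z l) \<in> borel_measurable M"
    and [measurable]: "f \<in> borel_measurable M" "g \<in> borel_measurable M"
  shows "(\<lambda>z. error_kernel m t (F z) (f z) (g z)) \<in> borel_measurable M"
  unfolding error_kernel_def sym_kernel_def
proof (intro borel_measurable_diff borel_measurable_sum)
  fix l assume "l \<in> {..<m}"
  then have [measurable]: "(\<lambda>z. F z l) \<in> borel_measurable M" using assms by auto
  show "(\<lambda>z. omega \<delta> t l * (kernel (F z l) (f z) (g z) + kernel (- F z l) (f z) (g z)))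
      \<in> borel_measurable M"
    by measurable
qed measurable

lemma abs_error_kernel_le:
  "\<bar>error_kernel m t \<mu>s x y\<bar> \<le> (\<Sum>l<m. \<bar>omega \<delta> t l\<bar> * (2 / \<bar>\<mu>s l\<bar>)) + 1/\<delta>"
proof -
  have "\<bar>omega \<delta> t l * sym_kernel x y (\<mu>s l)\<bar> \<le> \<bar>omega \<delta> t l\<bar> * (2 / \<bar>\<mu>s l\<bar>)" for l
    using abs_kernel_le[of "\<mu>s l" x y] abs_kernel_le[of "- \<mu>s l" x y]
    unfolding sym_kernel_def abs_mult by (intro mult_left_mono) auto
  then have "\<bar>\<Sum>l<m. omega \<delta> t l * sym_kernel x y (\<mu>s l)\<bar> \<le> (\<Sum>l<m. \<bar>omega \<delta> t l\<bar> * (2 / \<bar>\<mu>s l\<bar>))"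
    by (rule order_trans[OF sum_abs sum_mono])
  then show ?thesis
    unfolding error_kernel_def using abs_mean_kernel_le[of x y] by linarith
qed

lemma integrable_weighted_row_norm:
  assumes D_meas: "(\<lambda>(x, y). D x y) \<in> borel_measurable (lborel \<Otimes>\<^sub>M lborel)"
    and D_bound: "\<And>x y. \<bar>D x y\<bar> \<le> B"
  shows "integrable lborel (\<lambda>y. (D x y)^2 * weight y)"
    and "integrable lborel (\<lambda>x. (\<integral>y. (D x y)^2 * weight y \<partial>lborel) * weight x)"
proof -
  have [measurable]: "D x \<in> borel_measurable lborel" for x
    using measurable_Pair2[OF D_meas] by simp
  have sq: "\<bar>(D x y)^2\<bar> \<le> B^2" for x y
    using power_mono[OF D_bound[of x y], of 2] by simp
  show row: "integrable lborel (\<lambda>y. (D x y)^2 * weight y)" for x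
    using integrable_weight sq by (intro integrable_mult_bounded) auto
  have "(\<integral>y. (D x y)^2 * weight y \<partial>lborel) \<le> (\<integral>y. B^2 * weight y \<partial>lborel)" for x
    using row integrable_weight sq weight_nonneg
    by (intro integral_mono) (auto intro!: mult_right_mono simp: abs_le_iff)
  moreover have "0 \<le> (\<integral>y. (D x y)^2 * weight y \<partial>lborel)" for x
    using weight_nonneg by (intro Bochner_Integration.integral_nonneg) auto
  moreover have "(\<lambda>x. \<integral>y. (D x y)^2 * weight y \<partial>lborel) \<in> borel_measurable lborel"
    using D_meas by measurable
  ultimately show "integrable lborel (\<lambda>x. (\<integral>y. (D x y)^2 * weight y \<partial>lborel) * weight x)"
    using integrable_weight
    by (intro integrable_mult_bounded[where B="\<integral>y. B^2 * weight y \<partial>lborel"]) auto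
qed

lemma wnorm_le_hilbert_schmidt:
  assumes D_meas: "(\<lambda>(x, y). D x y) \<in> borel_measurable (lborel \<Otimes>\<^sub>M lborel)"
    and D_bound: "\<And>x y. \<bar>D x y\<bar> \<le> B"
    and \<phi>: "\<phi> \<in> L2w xL xR sT" "wnorm xL xR sT \<phi> \<le> 1"
    and K_eq: "\<And>x. x \<in> {xL..xR} \<Longrightarrow> K \<phi> x = (\<integral>y. D x y * (\<phi> y * weight y) \<partial>lborel)"
  shows "wnorm xL xR sT (K \<phi>) \<le> sqrt (\<integral>x. (\<integral>y. (D x y)^2 * weight y \<partial>lborel) * weight x \<partial>lborel)"
proof -
  have [measurable]: "D x \<in> borel_measurable lborel" for x
    using measurable_Pair2[OF D_meas] by simp
  define Q where "Q x = (\<integral>y. (D x y)^2 * weight y \<partial>lborel)" for x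
  note row = integrable_weighted_row_norm[where D=D, OF D_meas D_bound, folded Q_def]
  have set_eq: "(LINT x:{xL..xR}|lborel. (f x)^2 * sT x) = (\<integral>x. (f x)^2 * weight x \<partial>lborel)" for f
    unfolding set_lebesgue_integral_def weight_def by (intro Bochner_Integration.integral_cong) auto
  have \<phi>_norm: "(\<integral>x. (\<phi> x)^2 * weight x \<partial>lborel) \<le> 1"
    using \<phi>(2) set_eq[of \<phi>] unfolding wnorm_def by (metis real_sqrt_le_1_iff)
  have "(K \<phi> x)^2 \<le> Q x" if x: "x \<in> {xL..xR}" for x
  proof -
    have "(K \<phi> x)^2 \<le> Q x * (\<integral>y. (\<phi> y)^2 * weight y \<partial>lborel)"
      unfolding K_eq[OF x] Q_def mult.assoc[symmetric]
      using L2w_integrable[OF \<phi>(1)] row(1) weight_nonneg D_bound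
      by (intro weighted_Cauchy_Schwarz) (auto simp: mult.assoc intro!: integrable_mult_bounded)
    also have "\<dots> \<le> Q x"
      using \<phi>_norm weight_nonneg unfolding Q_def
      by (intro mult_left_le Bochner_Integration.integral_nonneg) auto
    finally show ?thesis .
  qed
  then have "(K \<phi> x)^2 * weight x \<le> Q x * weight x" for x
    using weight_nonneg[of x] by (cases "x \<in> {xL..xR}") (auto simp: weight_def intro: mult_right_mono)
  moreover have "0 \<le> Q x * weight x" for x
    unfolding Q_def using weight_nonneg
    by (intro mult_nonneg_nonneg Bochner_Integration.integral_nonneg) auto
  ultimately have "(\<integral>x. (K \<phi> x)^2 * weight x \<partial>lborel) \<le> (\<integral>x. Q x * weight x \<partial>lborel)"
    using row(2)
    by (cases "integrable lborel (\<lambda>x. (K \<phi> x)^2 * weight x)")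
      (auto intro!: integral_mono Bochner_Integration.integral_nonneg simp: not_integrable_integral_eq)
  then show ?thesis unfolding wnorm_def set_eq Q_def by (rule real_sqrt_le_mono)
qed

lemma opnorm_le_hilbert_schmidt:
  assumes D_meas: "(\<lambda>(x, y). D x y) \<in> borel_measurable (lborel \<Otimes>\<^sub>M lborel)"
    and D_bound: "\<And>x y. \<bar>D x y\<bar> \<le> B"
    and K_eq: "\<And>\<phi> x. \<phi> \<in> L2w xL xR sT \<Longrightarrow> x \<in> {xL..xR} \<Longrightarrow>
      K \<phi> x = (\<integral>y. D x y * (\<phi> y * weight y) \<partial>lborel)"
  shows "(opnorm xL xR sT K)^2 \<le> (\<integral>\<^sup>+x. \<integral>\<^sup>+y. ennreal (weight x * weight y * (D x y)^2) \<partial>lborel \<partial>lborel)"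
proof -
  define R where "R = (\<integral>x. (\<integral>y. (D x y)^2 * weight y \<partial>lborel) * weight x \<partial>lborel)"
  note row = integrable_weighted_row_norm[where D=D, OF D_meas D_bound]
  have row_nonneg: "0 \<le> (\<integral>y. (D x y)^2 * weight y \<partial>lborel) * weight x" for x
    using weight_nonneg by (intro mult_nonneg_nonneg Bochner_Integration.integral_nonneg) auto
  then have R: "0 \<le> R"
    unfolding R_def by (intro Bochner_Integration.integral_nonneg) auto
  have "wnorm xL xR sT (K \<phi>) \<le> sqrt R" if "\<phi> \<in> L2w xL xR sT" "wnorm xL xR sT \<phi> \<le> 1" for \<phi>
    unfolding R_def using wnorm_le_hilbert_schmidt[where D=D and K=K, OF D_meas D_bound that K_eq[OF that(1)]] .
  then have "opnorm xL xR sT K \<le> ennreal (sqrt R)"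
    unfolding opnorm_def by (intro SUP_least) (auto intro: ennreal_leI)
  then have "(opnorm xL xR sT K)^2 \<le> (ennreal (sqrt R))^2"
    by (intro power_mono) auto
  also have "\<dots> = ennreal R"
    using R by (simp add: ennreal_power)
  also have "ennreal R = (\<integral>\<^sup>+x. ennreal ((\<integral>y. (D x y)^2 * weight y \<partial>lborel) * weight x) \<partial>lborel)"
    unfolding R_def using row(2) row_nonneg by (intro nn_integral_eq_integral[symmetric]) auto
  also have "\<dots> = (\<integral>\<^sup>+x. \<integral>\<^sup>+y. ennreal (weight x * weight y * (D x y)^2) \<partial>lborel \<partial>lborel)"
  proof (intro nn_integral_cong)
    fix x
    have "(\<integral>y. weight x * weight y * (D x y)^2 \<partial>lborel) = (\<integral>y. weight x * ((D x y)^2 * weight y) \<partial>lborel)"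
      by (intro Bochner_Integration.integral_cong) (simp_all add: mult_ac)
    then have eq: "(\<integral>y. (D x y)^2 * weight y \<partial>lborel) * weight x = (\<integral>y. weight x * weight y * (D x y)^2 \<partial>lborel)"
      by (simp add: mult.commute)
    have "integrable lborel (\<lambda>y. weight x * ((D x y)^2 * weight y))"
      using row(1)[of x] by simp
    then have "integrable lborel (\<lambda>y. weight x * weight y * (D x y)^2)"
      by (simp add: mult_ac)
    moreover have "AE y in lborel. 0 \<le> weight x * weight y * (D x y)^2"
      using weight_nonneg by (intro AE_I2 mult_nonneg_nonneg) auto
    ultimately show "ennreal ((\<integral>y. (D x y)^2 * weight y \<partial>lborel) * weight x)
        = (\<integral>\<^sup>+y. ennreal (weight x * weight y * (D x y)^2) \<partial>lborel)"
      unfolding eq by (intro nn_integral_eq_integral[symmetric]) auto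
  qed
  finally show ?thesis .
qed

lemma nn_integral_weight: "(\<integral>\<^sup>+x. ennreal (weight x) \<partial>lborel) = ennreal (\<integral>x. weight x \<partial>lborel)"
  using integrable_weight weight_nonneg by (intro nn_integral_eq_integral) auto

lemma integral_weight_nonneg: "0 \<le> (\<integral>x. weight x \<partial>lborel)"
  using weight_nonneg by (intro Bochner_Integration.integral_nonneg) auto

end

locale stratified_slab = transport_slab +
  fixes m :: nat and t :: "nat \<Rightarrow> real"
  assumes t_first: "t 0 = -1" and t_last: "t m = -\<delta>" and t_step: "\<forall>l<m. t l < t (Suc l)"
begin

definition stratum :: "nat \<Rightarrow> real set" where "stratum l = {t l..<t (Suc l)}"
definition width :: "nat \<Rightarrow> real" where "width l = t (Suc l) - t l"
definition stratum_mean :: "real \<Rightarrow> real \<Rightarrow> nat \<Rightarrow> real" where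
  "stratum_mean x y l = (1 / width l) * (LINT \<mu>:stratum l|lborel. sym_kernel x y \<mu>)"
definition centered_kernel :: "real \<Rightarrow> real \<Rightarrow> nat \<Rightarrow> real \<Rightarrow> real" where
  "centered_kernel x y l \<mu> = indicator (stratum l) \<mu> * (sym_kernel x y \<mu> - stratum_mean x y l)"

text \<open>Beyond the \<open>m\<close> strata the law is an arbitrary probability measure, so that the family
  is a product of probability spaces.\<close>
definition stratum_law :: "nat \<Rightarrow> real measure" where
  "stratum_law l =
    (if l < m then uniform_measure lborel (stratum l) else uniform_measure lborel {0..<1})"

lemma t_mono: "i \<le> j \<Longrightarrow> j \<le> m \<Longrightarrow> t i \<le> t j"
proof (induction j)
  case (Suc j)
  then show ?case
    using t_step by (cases "i = Suc j") (auto intro: order_trans[OF _ less_imp_le])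
qed simp

lemma t_range: "k \<le> m \<Longrightarrow> -1 \<le> t k \<and> t k \<le> -\<delta>"
  using t_mono[of 0 k] t_mono[of k m] t_first t_last by auto

lemma width_pos: "l < m \<Longrightarrow> 0 < width l"
  unfolding width_def using t_step by auto

lemma stratum_subset: "l < m \<Longrightarrow> stratum l \<subseteq> {-1..-\<delta>}"
  unfolding stratum_def using t_range[of l] t_range[of "Suc l"] by auto

lemma stratum_sets[measurable]: "stratum l \<in> sets borel"
  unfolding stratum_def by auto

lemma measure_stratum: "l < m \<Longrightarrow> measure lborel (stratum l) = width l"
  unfolding stratum_def width_def using t_step by auto

lemma emeasure_stratum_finite: "emeasure lborel (stratum l) < \<infinity>"
  unfolding stratum_def by (intro emeasure_bounded_finite) simp

lemma omega_eq_width: "omega \<delta> t l = width l / velocity_measure"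
  unfolding omega_def width_def velocity_measure_def by simp

lemma set_integrable_kernel_stratum:
  assumes "l < m"
  shows "set_integrable lborel (stratum l) (\<lambda>\<mu>. kernel \<mu> x y)"
    "set_integrable lborel (stratum l) (\<lambda>\<mu>. kernel (-\<mu>) x y)"
    "set_integrable lborel (stratum l) (sym_kernel x y)"
proof -
  have abs_ge: "\<delta> \<le> \<bar>\<mu>\<bar>" if "\<mu> \<in> stratum l" for \<mu>
    using stratum_subset[OF assms] that delta_pos by auto
  show "set_integrable lborel (stratum l) (\<lambda>\<mu>. kernel \<mu> x y)"
    "set_integrable lborel (stratum l) (\<lambda>\<mu>. kernel (-\<mu>) x y)"
    using set_integrable_kernel[OF stratum_sets emeasure_stratum_finite abs_ge] by auto
  then show "set_integrable lborel (stratum l) (sym_kernel x y)"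
    unfolding sym_kernel_def by (rule set_integral_add(1))
qed

lemma set_integral_split_strata:
  fixes g :: "real \<Rightarrow> real"
  assumes "k \<le> m" and g: "set_integrable lborel {-1..<-\<delta>} g"
  shows "(LINT \<mu>:{t 0..<t k}|lborel. g \<mu>) = (\<Sum>l<k. LINT \<mu>:stratum l|lborel. g \<mu>)"
  using assms(1)
proof (induction k)
  case (Suc k)
  have r: "-1 \<le> t 0" "t 0 \<le> t k" "t k \<le> t (Suc k)" "t (Suc k) \<le> -\<delta>"
    using t_range[of 0] t_range[of "Suc k"] t_mono[of k "Suc k"] t_mono[of 0 k] Suc by auto
  then have "{t 0..<t (Suc k)} = {t 0..<t k} \<union> stratum k"
    unfolding stratum_def by auto
  then have "(LINT \<mu>:{t 0..<t (Suc k)}|lborel. g \<mu>)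
      = (LINT \<mu>:{t 0..<t k}|lborel. g \<mu>) + (LINT \<mu>:stratum k|lborel. g \<mu>)"
    using r by (simp, intro set_integral_Un set_integrable_subset[OF g]) (auto simp: stratum_def)
  then show ?case using Suc by simp
qed (simp add: set_lebesgue_integral_def)

lemma set_integral_Svel_kernel:
  "(LINT \<mu>:Svel \<delta>|lborel. kernel \<mu> x y) = (\<Sum>l<m. LINT \<mu>:stratum l|lborel. sym_kernel x y \<mu>)"
proof -
  have neg: "set_integrable lborel {-1..<-\<delta>} (\<lambda>\<mu>. kernel \<mu> x y)"
    "set_integrable lborel {-1..<-\<delta>} (\<lambda>\<mu>. kernel (-\<mu>) x y)"
    using delta_pos by (auto intro!: set_integrable_kernel emeasure_bounded_finite)
  have "(LINT \<mu>:Svel \<delta>|lborel. kernel \<mu> x y)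
      = (LINT \<mu>:{-1..<-\<delta>}|lborel. kernel \<mu> x y) + (LINT \<mu>:{\<delta><..1}|lborel. kernel \<mu> x y)"
    unfolding Svel_def using delta_pos
    by (intro set_integral_Un set_integrable_subset[OF
        set_integrable_kernel(1)[OF Svel_sets emeasure_Svel_finite Svel_abs_ge]])
      (auto simp: Svel_def)
  also have "\<dots> = (\<Sum>l<m. LINT \<mu>:stratum l|lborel. kernel \<mu> x y)
      + (\<Sum>l<m. LINT \<mu>:stratum l|lborel. kernel (-\<mu>) x y)"
    using set_integral_split_strata[OF order.refl neg(1)] set_integral_split_strata[OF order.refl neg(2)]
      set_integral_reflect[of \<delta> 1] t_first t_last by simp
  also have "\<dots> = (\<Sum>l<m. LINT \<mu>:stratum l|lborel. sym_kernel x y \<mu>)"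
    unfolding sum.distrib[symmetric] sym_kernel_def
    using set_integrable_kernel_stratum by (intro sum.cong refl set_integral_add(2)[symmetric]) auto
  finally show ?thesis .
qed

lemma error_kernel_eq_sum_centered:
  assumes "\<forall>l<m. \<mu>s l \<in> stratum l"
  shows "error_kernel m t \<mu>s x y = (\<Sum>l<m. omega \<delta> t l * centered_kernel x y l (\<mu>s l))"
proof -
  have "mean_kernel x y = (\<Sum>l<m. omega \<delta> t l * stratum_mean x y l)"
    unfolding mean_kernel_def set_integral_Svel_kernel sum_distrib_left
    using width_pos velocity_measure_pos
    by (intro sum.cong refl) (force simp: omega_eq_width stratum_mean_def)
  then show ?thesis
    unfolding error_kernel_def centered_kernel_def
    using assms by (simp add: sum_subtractf right_diff_distrib)
qed

lemma abs_centered_kernel_le: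
  assumes l: "l < m"
  shows "\<bar>centered_kernel x y l \<mu>\<bar> \<le> 2 * lipschitz_const * width l"
proof (cases "\<mu> \<in> stratum l")
  case True
  define b where "b = 2 * lipschitz_const * width l"
  have close: "\<bar>sym_kernel x y \<mu>' - sym_kernel x y \<mu>\<bar> \<le> b" if "\<mu>' \<in> stratum l" for \<mu>'
  proof -
    have "\<bar>sym_kernel x y \<mu>' - sym_kernel x y \<mu>\<bar> \<le> 2 * lipschitz_const * \<bar>\<mu>' - \<mu>\<bar>"
      using True that stratum_subset[OF l] by (intro sym_kernel_lipschitz) auto
    also have "\<dots> \<le> b"
      using True that lipschitz_const_nonneg unfolding b_def stratum_def width_def
      by (intro mult_left_mono) auto
    finally show ?thesis .
  qed
  have const: "set_integrable lborel (stratum l) (\<lambda>_. c)" "(LINT _:stratum l|lborel. c) = width l * c"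
    for c :: real
    using emeasure_stratum_finite measure_stratum[OF l]
    by (auto simp: set_integrable_def set_integral_const less_top[symmetric])
  note sym = set_integrable_kernel_stratum(3)[OF l, of x y]
  have "width l * (sym_kernel x y \<mu> - b) \<le> (LINT \<mu>':stratum l|lborel. sym_kernel x y \<mu>')"
    using set_integral_mono[OF const(1) sym, of "sym_kernel x y \<mu> - b"] close const(2) by force
  moreover have "(LINT \<mu>':stratum l|lborel. sym_kernel x y \<mu>') \<le> width l * (sym_kernel x y \<mu> + b)"
    using set_integral_mono[OF sym const(1), of "sym_kernel x y \<mu> + b"] close const(2) by force
  ultimately have "\<bar>sym_kernel x y \<mu> - stratum_mean x y l\<bar> \<le> b"
    using width_pos[OF l] unfolding stratum_mean_def by (auto simp: abs_le_iff field_simps)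
  then show ?thesis using True unfolding centered_kernel_def b_def by simp
qed (use width_pos[OF l] lipschitz_const_nonneg in \<open>simp add: centered_kernel_def\<close>)

lemma prob_space_stratum_law: "prob_space (stratum_law l)"
  using t_step unfolding stratum_law_def stratum_def
  by (auto intro!: prob_space_uniform_measure)

lemma sets_stratum_law[measurable_cong, simp]: "sets (stratum_law l) = sets borel"
  unfolding stratum_law_def by simp

lemma ordinate_law_eq: "ordinate_law m t = Pi\<^sub>M {..<m} stratum_law"
  unfolding ordinate_law_def stratum_law_def stratum_def by (intro PiM_cong) auto

lemma finite_product_prob_space_stratum_law: "finite_product_prob_space stratum_law {..<m}"
  unfolding finite_product_prob_space_def finite_product_sigma_finite_def
    finite_product_sigma_finite_axioms_def
  using product_prob_spaceI[OF prob_space_stratum_law] by (simp add: product_prob_space_def)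

lemma component_measurable:
  "l < m \<Longrightarrow> (\<lambda>\<mu>s. \<mu>s l) \<in> borel_measurable (Pi\<^sub>M {..<m} stratum_law)"
  using measurable_component_singleton[of l "{..<m}" stratum_law] by simp

lemma centered_kernel_measurable[measurable]: "centered_kernel x y l \<in> borel_measurable borel"
  unfolding centered_kernel_def sym_kernel_def by measurable

lemma integral_centered_kernel:
  assumes l: "l < m"
  shows "(\<integral>\<mu>. centered_kernel x y l \<mu> \<partial>stratum_law l) = 0"
proof -
  have "(\<integral>\<mu>. centered_kernel x y l \<mu> \<partial>stratum_law l)
      = (\<integral>\<mu>. indicator (stratum l) \<mu> * centered_kernel x y l \<mu> \<partial>lborel) / width l"
    unfolding stratum_law_def using l t_step
    by (simp add: integral_uniform_measure_Ico stratum_def width_def)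
  also have "(\<integral>\<mu>. indicator (stratum l) \<mu> * centered_kernel x y l \<mu> \<partial>lborel)
      = (LINT \<mu>:stratum l|lborel. sym_kernel x y \<mu> - stratum_mean x y l)"
    unfolding set_lebesgue_integral_def centered_kernel_def
    by (intro Bochner_Integration.integral_cong) (auto simp: indicator_def)
  also have "\<dots> = 0"
    using set_integrable_kernel_stratum(3)[OF l] emeasure_stratum_finite width_pos[OF l]
      measure_stratum[OF l]
    by (simp add: set_integral_const set_integrable_def less_top[symmetric]
        stratum_mean_def)
  finally show ?thesis by simp
qed

lemma AE_ordinates_in_strata:
  "AE \<mu>s in Pi\<^sub>M {..<m} stratum_law. \<forall>l\<in>{..<m}. \<mu>s l \<in> stratum l"
proof (intro AE_finite_allI)
  fix l assume l: "l \<in> {..<m}"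
  have "AE \<mu> in stratum_law l. \<mu> \<in> stratum l"
    unfolding stratum_law_def using l by (auto intro!: AE_uniform_measureI)
  then show "AE \<mu>s in Pi\<^sub>M {..<m} stratum_law. \<mu>s l \<in> stratum l"
    by (rule AE_PiM_component[where M=stratum_law and P="\<lambda>\<mu>. \<mu> \<in> stratum l",
        OF prob_space_stratum_law l])
qed simp

lemma expected_square_error_kernel:
  "(\<integral>\<^sup>+\<mu>s. ennreal ((error_kernel m t \<mu>s x y)^2) \<partial>ordinate_law m t)
    \<le> ennreal (\<Sum>l<m. (omega \<delta> t l)^2 * (2 * lipschitz_const * width l)^2)"
proof -
  interpret P: finite_product_prob_space stratum_law "{..<m}"
    by (rule finite_product_prob_space_stratum_law)
  define f where "f l \<mu> = omega \<delta> t l * centered_kernel x y l \<mu>" for l \<mu>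
  have "(\<integral>\<^sup>+\<mu>s. ennreal ((error_kernel m t \<mu>s x y)^2) \<partial>ordinate_law m t)
      = (\<integral>\<^sup>+\<mu>s. ennreal ((\<Sum>l<m. f l (\<mu>s l))^2) \<partial>Pi\<^sub>M {..<m} stratum_law)"
    unfolding ordinate_law_eq f_def using AE_ordinates_in_strata
    by (intro nn_integral_cong_AE) (auto simp: error_kernel_eq_sum_centered)
  also have "\<dots> \<le> ennreal (\<Sum>l<m. (\<bar>omega \<delta> t l\<bar> * (2 * lipschitz_const * width l))^2)"
  proof (rule P.nn_integral_square_sum_centered_le)
    show "f l \<in> borel_measurable (stratum_law l)" for l
      unfolding f_def by measurable
    show "\<bar>f l \<mu>\<bar> \<le> \<bar>omega \<delta> t l\<bar> * (2 * lipschitz_const * width l)" if "l \<in> {..<m}" for l \<mu>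
      unfolding f_def abs_mult using abs_centered_kernel_le that by (intro mult_left_mono) auto
    show "(\<integral>\<mu>. f l \<mu> \<partial>stratum_law l) = 0" if "l \<in> {..<m}" for l
      unfolding f_def using integral_centered_kernel that by simp
  qed
  finally show ?thesis by (simp add: power_mult_distrib)
qed

lemma m_pos: "0 < m"
  using t_first t_last delta_less_1 by (cases m) auto

lemma expected_opnorm_square_le:
  "(\<integral>\<^sup>+\<mu>s. (opnorm xL xR sT (dTxi xL xR sT sS \<delta> m t \<mu>s))^2 \<partial>ordinate_law m t)
    \<le> (\<integral>\<^sup>+x. ennreal (weight x) \<partial>lborel)^2
      * ennreal (\<Sum>l<m. (omega \<delta> t l)^2 * (2 * lipschitz_const * width l)^2)"
proof -
  interpret P: finite_product_prob_space stratum_law "{..<m}"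
    by (rule finite_product_prob_space_stratum_law)
  let ?M = "(Pi\<^sub>M {..<m} stratum_law \<Otimes>\<^sub>M lborel) \<Otimes>\<^sub>M lborel"
  have "(\<lambda>z. error_kernel m t (fst (fst z)) (snd (fst z)) (snd z)) \<in> borel_measurable ?M"
  proof (rule error_kernel_measurable)
    fix l assume "l < m"
    then show "(\<lambda>z. fst (fst z) l) \<in> borel_measurable ?M"
      by (intro measurable_compose[OF measurable_compose[OF measurable_fst measurable_fst]
          component_measurable])
  qed measurable
  then have D_meas: "(\<lambda>((\<mu>s, x), y). error_kernel m t \<mu>s x y) \<in> borel_measurable ?M"
    by (simp add: case_prod_beta')
  have "(opnorm xL xR sT (dTxi xL xR sT sS \<delta> m t \<mu>s))^2
      \<le> (\<integral>\<^sup>+x. \<integral>\<^sup>+y. ennreal (weight x * weight y * (error_kernel m t \<mu>s x y)^2) \<partial>lborel \<partial>lborel)"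
    for \<mu>s
  proof (rule opnorm_le_hilbert_schmidt[where D="error_kernel m t \<mu>s"])
    show "(\<lambda>(x, y). error_kernel m t \<mu>s x y) \<in> borel_measurable (lborel \<Otimes>\<^sub>M lborel)"
      unfolding case_prod_beta' by (rule error_kernel_measurable) auto
  qed (auto intro: abs_error_kernel_le dTxi_eq_integral)
  then have "(\<integral>\<^sup>+\<mu>s. (opnorm xL xR sT (dTxi xL xR sT sS \<delta> m t \<mu>s))^2 \<partial>ordinate_law m t)
      \<le> (\<integral>\<^sup>+\<mu>s. \<integral>\<^sup>+x. \<integral>\<^sup>+y. ennreal (weight x * weight y * (error_kernel m t \<mu>s x y)^2)
          \<partial>lborel \<partial>lborel \<partial>ordinate_law m t)"
    by (intro nn_integral_mono)
  also have "\<dots> \<le> (\<integral>\<^sup>+x. ennreal (weight x) \<partial>lborel)^2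
      * ennreal (\<Sum>l<m. (omega \<delta> t l)^2 * (2 * lipschitz_const * width l)^2)"
    unfolding ordinate_law_eq
    using expected_square_error_kernel weight_nonneg unfolding ordinate_law_eq
    by (intro P.nn_integral_weighted_square_le[OF D_meas]) auto
  finally show ?thesis .
qed

lemma sum_weights_square_le:
  assumes \<alpha>: "\<forall>l<m. real (2 * m) * omega \<delta> t l \<le> \<alpha>"
  shows "(\<Sum>l<m. (omega \<delta> t l)^2 * (2 * lipschitz_const * width l)^2)
    \<le> 2 * lipschitz_const^2 * velocity_measure^2 * \<alpha>^4 / real (2 * m)^3"
proof -
  define n where "n = real (2 * m)"
  have n: "0 < n" unfolding n_def using m_pos by auto
  have omega: "0 \<le> omega \<delta> t l" "omega \<delta> t l \<le> \<alpha> / n" if "l < m" for l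
    using width_pos[OF that] velocity_measure_pos \<alpha> that n
    by (auto simp: omega_eq_width n_def field_simps)
  have "(\<Sum>l<m. (omega \<delta> t l)^2 * (2 * lipschitz_const * width l)^2)
      = (\<Sum>l<m. 4 * lipschitz_const^2 * velocity_measure^2 * (omega \<delta> t l)^4)"
    using velocity_measure_pos
    by (intro sum.cong refl) (simp add: omega_eq_width power2_eq_square power4_eq_xxxx)
  also have "\<dots> \<le> (\<Sum>l<m. 4 * lipschitz_const^2 * velocity_measure^2 * (\<alpha> / n)^4)"
    using omega by (intro sum_mono mult_left_mono power_mono) auto
  also have "\<dots> = 2 * lipschitz_const^2 * velocity_measure^2 * \<alpha>^4 / n^3"
    using n unfolding n_def by (simp add: field_simps power_def eval_nat_numeral)
  finally show ?thesis unfolding n_def .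
qed

lemma expected_opnorm_square_le_cube:
  assumes \<alpha>: "\<forall>l<m. real (2 * m) * omega \<delta> t l \<le> \<alpha>"
  shows "(\<integral>\<^sup>+\<mu>s. (opnorm xL xR sT (dTxi xL xR sT sS \<delta> m t \<mu>s))^2 \<partial>ordinate_law m t)
    \<le> ennreal (2 * (\<integral>x. weight x \<partial>lborel)^2 * lipschitz_const^2 * velocity_measure^2 * \<alpha>^4
      / real (2 * m)^3)"
proof -
  have "(\<integral>\<^sup>+\<mu>s. (opnorm xL xR sT (dTxi xL xR sT sS \<delta> m t \<mu>s))^2 \<partial>ordinate_law m t)
      \<le> ennreal ((\<integral>x. weight x \<partial>lborel)^2
        * (\<Sum>l<m. (omega \<delta> t l)^2 * (2 * lipschitz_const * width l)^2))"
    using expected_opnorm_square_le integral_weight_nonneg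
    by (simp add: nn_integral_weight ennreal_power ennreal_mult')
  also have "\<dots> \<le> ennreal ((\<integral>x. weight x \<partial>lborel)^2
      * (2 * lipschitz_const^2 * velocity_measure^2 * \<alpha>^4 / real (2 * m)^3))"
    using sum_weights_square_le[OF \<alpha>] by (intro ennreal_leI mult_left_mono) auto
  finally show ?thesis by (simp add: mult_ac)
qed

end

theorem mainTheorem6:
  fixes xL xR \<delta> \<alpha>bar :: real and sT sS :: "real \<Rightarrow> real"
  assumes "xL < xR"
    and "continuous_on {xL..xR} sT" and "continuous_on {xL..xR} sS"
    and "\<forall>x\<in>{xL..xR}. 0 < sS x \<and> sS x < sT x"
    and "0 < \<delta>" and "\<delta> < 1"
  shows "\<exists>C::real. \<forall>(m::nat) (t::nat \<Rightarrow> real).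
           1 \<le> m \<and> t 0 = -1 \<and> t m = -\<delta> \<and> (\<forall>l<m. t l < t (Suc l))
           \<and> (\<forall>l<m. real (2 * m) * omega \<delta> t l \<le> \<alpha>bar)
           \<longrightarrow> (\<integral>\<^sup>+ \<mu>s. (opnorm xL xR sT (dTxi xL xR sT sS \<delta> m t \<mu>s))\<^sup>2 \<partial>ordinate_law m t)
               \<le> ennreal (C * (ln (real (2 * m)) + 1) * real (2 * m) powr (-3))"
proof -
  interpret transport_slab xL xR sT sS \<delta> using assms by unfold_locales auto
  define C where
    "C = 2 * (\<integral>x. weight x \<partial>lborel)^2 * lipschitz_const^2 * velocity_measure^2 * \<alpha>bar^4"
  have "0 \<le> C" unfolding C_def by simp
  show ?thesis
  proof (intro exI[of _ C] allI impI, elim conjE)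
    fix m :: nat and t :: "nat \<Rightarrow> real"
    assume "1 \<le> m" "t 0 = -1" "t m = -\<delta>" "\<forall>l<m. t l < t (Suc l)"
      and \<alpha>: "\<forall>l<m. real (2 * m) * omega \<delta> t l \<le> \<alpha>bar"
    then interpret stratified_slab xL xR sT sS \<delta> m t by unfold_locales
    have "(\<integral>\<^sup>+\<mu>s. (opnorm xL xR sT (dTxi xL xR sT sS \<delta> m t \<mu>s))^2 \<partial>ordinate_law m t)
        \<le> ennreal (C / real (2 * m)^3)"
      using expected_opnorm_square_le_cube[OF \<alpha>] unfolding C_def .
    also have "\<dots> \<le> ennreal (C * (ln (real (2 * m)) + 1) * real (2 * m) powr (-3))"
      using \<open>1 \<le> m\<close> \<open>0 \<le> C\<close> by (intro ennreal_leI divide_cube_le_log_powr) auto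
    finally show "(\<integral>\<^sup>+\<mu>s. (opnorm xL xR sT (dTxi xL xR sT sS \<delta> m t \<mu>s))^2 \<partial>ordinate_law m t)
        \<le> ennreal (C * (ln (real (2 * m)) + 1) * real (2 * m) powr (-3))" .
  qed
qed

end
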